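(* Let $(X,\sigma_X)$, $(Y,\sigma_Y)$ be one-sided irreducible sofic shifts and $\pi:X\to Y$ a one-block factor map, and suppose $X$ has the specification property. Let $\mu\in M(X,\sigma_X)$ be the unique measure of maximal entropy of $(X,\sigma_X)$ and $\nu=\pi\mu$. Then $\mu$ is the unique relative equilibrium state for $0$ over $\nu$, i.e. $\mu$ is the unique $\bar\mu\in M(X,\sigma_X)$ with $\pi\bar\mu=\nu$ and $h_{\bar\mu}(\sigma_X)=\sup\{h_{\mu'}(\sigma_X):\mu'\in M(X,\sigma_X),\pi\mu'=\nu\}$.
   Context: Sofic shifts are one-sided subshifts (closed shift-invariant subsets of $\{1,\dots,k\}^{\mathbb N}$) that are images of shifts of finite type under factor maps; irreducible means for any allowable words $u,v$ there is $w$ with $uwv$ allowable. Specification: there is a fixed $p>0$ such that for all allowable $u,v$ some $w$ of length $p$ makes $uwv$ allowable. A factor map is a continuous surjection commuting with the shifts; one-block means $\pi(x)_i$ depends only on $x_i$. $M(X,\sigma_X)$ denotes invariant Borel probability measures and $h$ entropy. *)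

theory Defs
  imports "HOL-Probability.Probability"
begin

text \<open>Points of one-sided shift spaces: sequences nat \<Rightarrow> nat with the product
  topology (the library's topology on function spaces; nat is discrete).\<close>

definition shift :: "(nat \<Rightarrow> nat) \<Rightarrow> (nat \<Rightarrow> nat)" where
  "shift x = (\<lambda>i. x (Suc i))"

definition full_shift :: "nat \<Rightarrow> (nat \<Rightarrow> nat) set" where
  "full_shift k = {x. \<forall>i. x i \<in> {1..k}}"

definition subshift :: "nat \<Rightarrow> (nat \<Rightarrow> nat) set \<Rightarrow> bool" where
  "subshift k X \<longleftrightarrow> X \<noteq> {} \<and> X \<subseteq> full_shift k \<and> closed X \<and> (\<forall>x\<in>X. shift x \<in> X)"

definition allowable :: "(nat \<Rightarrow> nat) set \<Rightarrow> nat list \<Rightarrow> bool" where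
  "allowable X w \<longleftrightarrow> (\<exists>x\<in>X. \<exists>i. w = map x [i..<i + length w])"

definition SFT :: "nat \<Rightarrow> (nat \<Rightarrow> nat) set \<Rightarrow> bool" where
  "SFT k X \<longleftrightarrow> subshift k X \<and>
     (\<exists>F. finite F \<and> X = {x \<in> full_shift k. \<forall>i n. map x [i..<i + n] \<notin> F})"

definition factor_map :: "(nat \<Rightarrow> nat) set \<Rightarrow> (nat \<Rightarrow> nat) set \<Rightarrow> ((nat \<Rightarrow> nat) \<Rightarrow> (nat \<Rightarrow> nat)) \<Rightarrow> bool" where
  "factor_map X Y \<pi> \<longleftrightarrow> continuous_on X \<pi> \<and> \<pi> ` X = Y \<and> (\<forall>x\<in>X. \<pi> (shift x) = shift (\<pi> x))"

definition one_block :: "(nat \<Rightarrow> nat) set \<Rightarrow> ((nat \<Rightarrow> nat) \<Rightarrow> (nat \<Rightarrow> nat)) \<Rightarrow> bool" where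
  "one_block X \<pi> \<longleftrightarrow> (\<exists>\<Phi>::nat \<Rightarrow> nat. \<forall>x\<in>X. \<pi> x = \<Phi> \<circ> x)"

definition sofic :: "nat \<Rightarrow> (nat \<Rightarrow> nat) set \<Rightarrow> bool" where
  "sofic k Y \<longleftrightarrow> subshift k Y \<and> (\<exists>k' Z \<phi>. SFT k' Z \<and> factor_map Z Y \<phi>)"

definition irreducible :: "(nat \<Rightarrow> nat) set \<Rightarrow> bool" where
  "irreducible X \<longleftrightarrow> (\<forall>u v. allowable X u \<longrightarrow> allowable X v \<longrightarrow> (\<exists>w. allowable X (u @ w @ v)))"

definition has_specification :: "(nat \<Rightarrow> nat) set \<Rightarrow> bool" where
  "has_specification X \<longleftrightarrow> (\<exists>p>0. \<forall>u v. allowable X u \<longrightarrow> allowable X v \<longrightarrow>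
      (\<exists>w. length w = p \<and> allowable X (u @ w @ v)))"

definition inv_measures :: "(nat \<Rightarrow> nat) set \<Rightarrow> (nat \<Rightarrow> nat) measure set" where
  "inv_measures X = {\<mu>. sets \<mu> = sets (restrict_space borel X) \<and> prob_space \<mu> \<and>
      distr \<mu> (restrict_space borel X) shift = \<mu>}"

definition pushfwd :: "(nat \<Rightarrow> nat) set \<Rightarrow> ((nat \<Rightarrow> nat) \<Rightarrow> (nat \<Rightarrow> nat)) \<Rightarrow> (nat \<Rightarrow> nat) measure \<Rightarrow> (nat \<Rightarrow> nat) measure" where
  "pushfwd Y \<pi> \<mu> = distr \<mu> (restrict_space borel Y) \<pi>"

definition part_entropy :: "'a measure \<Rightarrow> ('a \<Rightarrow> 'b) \<Rightarrow> real" where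
  "part_entropy \<mu> f = - (\<Sum>v\<in>f ` space \<mu>.
      measure \<mu> (f -` {v} \<inter> space \<mu>) * ln (measure \<mu> (f -` {v} \<inter> space \<mu>)))"

text \<open>Kolmogorov-Sinai entropy h_mu(T): supremum over finite measurable partitions P
  (level sets of f) of lim (1/n) H_mu(P v T^-1 P v ... v T^-(n-1) P).
  The n-fold join is the partition by the itinerary x \<mapsto> [f x, f (T x), ..., f (T^(n-1) x)].\<close>
definition ks_entropy :: "'a measure \<Rightarrow> ('a \<Rightarrow> 'a) \<Rightarrow> real" where
  "ks_entropy \<mu> T = (SUP f \<in> {f :: 'a \<Rightarrow> nat. f \<in> measurable \<mu> (count_space UNIV) \<and> finite (f ` space \<mu>)}.
      lim (\<lambda>n. part_entropy \<mu> (\<lambda>x. map (\<lambda>i. f ((T ^^ i) x)) [0..<n]) / real n))"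

end

theory Submission
  imports Defs
begin

text \<open>The unique measure of maximal entropy \<open>\<mu>\<close> lies in the fibre of \<open>\<pi>\<mu>\<close>, so the relative
  supremum over that fibre is squeezed between \<open>h \<mu>\<close> and the global supremum, which are equal; a
  relative maximiser is then a global maximiser and hence \<open>\<mu>\<close>. The only analytic input is that the
  entropies of invariant measures on a subshift over \<open>k\<close> symbols are bounded above. For this, a finite
  partition is approximated by a cylinder partition of depth \<open>N\<close> off a set of small measure; the
  \<open>n\<close>-step itinerary is then determined by the first \<open>n + N\<close> symbols together with the itinerary of
  the correction function recording the exceptional values, which gives entropy at most
  \<open>(n + N) ln k + 2 n\<close>. Irreducibility, specification and the properties of \<open>\<pi>\<close> are what make
  such a unique \<open>\<mu>\<close> exist; once it is given, only the subshift structure of \<open>X\<close> is used.\<close>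

section \<open>Entropy of finite partitions\<close>

definition itinerary :: "('a \<Rightarrow> 'a) \<Rightarrow> ('a \<Rightarrow> 'b) \<Rightarrow> nat \<Rightarrow> 'a \<Rightarrow> 'b list" where
  "itinerary T f n x = map (\<lambda>i. f ((T ^^ i) x)) [0..<n]"

lemma ks_entropy_eq_SUP_itinerary:
  "ks_entropy \<mu> T = (SUP f \<in> {f :: 'a \<Rightarrow> nat. f \<in> measurable \<mu> (count_space UNIV) \<and> finite (f ` space \<mu>)}.
      lim (\<lambda>n. part_entropy \<mu> (itinerary T f n) / real n))"
  by (simp add: ks_entropy_def itinerary_def[abs_def])

lemma part_entropy_cong:
  assumes "\<And>x. x \<in> space M \<Longrightarrow> u x = v x"
  shows "part_entropy M u = part_entropy M v"
proof -
  have "u ` space M = v ` space M" using assms by (auto simp: image_def)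
  moreover have "\<And>a. u -` {a} \<inter> space M = v -` {a} \<inter> space M" using assms by auto
  ultimately show ?thesis unfolding part_entropy_def by simp
qed

lemma simple_function_map_upt:
  assumes "\<And>i. i < n \<Longrightarrow> simple_function M (u i)"
  shows "simple_function M (\<lambda>x. map (\<lambda>i. u i x) [0..<n])"
  using assms
proof (induction n)
  case (Suc n)
  have "simple_function M (\<lambda>x. (\<lambda>a b. a @ [b]) (map (\<lambda>i. u i x) [0..<n]) (u n x))"
    by (rule simple_function_compose2) (use Suc in auto)
  then show ?case by simp
qed simp

context prob_space
begin

lemma part_entropy_eq_entropy:
  assumes "simple_function M u"
  shows "part_entropy M u = entropy (exp 1) (count_space (u ` space M)) u"
proof -
  interpret information_space M "exp 1" by standard simp
  show ?thesis
    using entropy_simple_distributed[OF simple_distributedI[OF assms measure_nonneg refl]]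
    by (simp add: part_entropy_def log_def)
qed

lemma part_entropy_comp_le:
  assumes u: "simple_function M u" and v: "\<And>x. x \<in> space M \<Longrightarrow> v x = \<psi> (u x)"
  shows "part_entropy M v \<le> part_entropy M u"
proof -
  interpret information_space M "exp 1" by standard simp
  have s: "simple_function M (\<psi> \<circ> u)" using u by auto
  have "part_entropy M v = part_entropy M (\<psi> \<circ> u)" using v by (intro part_entropy_cong) auto
  also have "\<dots> = entropy (exp 1) (count_space ((\<psi> \<circ> u) ` space M)) (\<psi> \<circ> u)"
    by (rule part_entropy_eq_entropy[OF s])
  also have "\<dots> \<le> entropy (exp 1) (count_space (u ` space M)) u"
    by (rule entropy_data_processing[OF u])
  also have "\<dots> = part_entropy M u" using u by (simp add: part_entropy_eq_entropy)
  finally show ?thesis .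
qed

lemma part_entropy_pair_le:
  assumes u: "simple_function M u" and v: "simple_function M v"
  shows "part_entropy M (\<lambda>x. (u x, v x)) \<le> part_entropy M u + part_entropy M v"
proof -
  interpret information_space M "exp 1" by standard simp
  have "part_entropy M (\<lambda>x. (u x, v x))
      = entropy (exp 1) (count_space ((\<lambda>x. (u x, v x)) ` space M)) (\<lambda>x. (u x, v x))"
    using u v by (intro part_entropy_eq_entropy) auto
  also have "\<dots> = entropy (exp 1) (count_space (u ` space M)) u +
      conditional_entropy (exp 1) (count_space (v ` space M)) (count_space (u ` space M)) v u"
    by (rule entropy_chain_rule[OF u v])
  also have "\<dots> \<le> entropy (exp 1) (count_space (u ` space M)) u + entropy (exp 1) (count_space (v ` space M)) v"
    using conditional_entropy_less_eq_entropy[OF v u] by simp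
  finally show ?thesis using u v by (simp add: part_entropy_eq_entropy)
qed

lemma part_entropy_le_ln_card:
  assumes u: "simple_function M u"
  shows "part_entropy M u \<le> ln (card (u ` space M))"
proof -
  interpret information_space M "exp 1" by standard simp
  have "entropy (exp 1) (count_space (u ` space M)) u \<le> log (exp 1) (card (u ` space M))"
    by (rule entropy_le_card[OF simple_distributedI[OF u measure_nonneg refl]])
  then show ?thesis using u by (simp add: part_entropy_eq_entropy log_def)
qed

lemma part_entropy_map_upt_le:
  assumes "\<And>i. i < n \<Longrightarrow> simple_function M (u i)"
  shows "part_entropy M (\<lambda>x. map (\<lambda>i. u i x) [0..<n]) \<le> (\<Sum>i<n. part_entropy M (u i))"
  using assms
proof (induction n)
  case 0
  have img: "(\<lambda>x. []) ` space M = {[]}" using not_empty by auto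
  show ?case by (simp add: img part_entropy_def prob_space)
next
  case (Suc n)
  have s1: "simple_function M (\<lambda>x. map (\<lambda>i. u i x) [0..<n])"
    by (rule simple_function_map_upt) (use Suc in auto)
  have s2: "simple_function M (u n)" using Suc by auto
  have "part_entropy M (\<lambda>x. map (\<lambda>i. u i x) [0..<Suc n])
      \<le> part_entropy M (\<lambda>x. (map (\<lambda>i. u i x) [0..<n], u n x))"
    by (rule part_entropy_comp_le[where \<psi> = "\<lambda>(a, b). a @ [b]"]) (use s1 s2 in auto)
  also have "\<dots> \<le> part_entropy M (\<lambda>x. map (\<lambda>i. u i x) [0..<n]) + part_entropy M (u n)"
    by (rule part_entropy_pair_le[OF s1 s2])
  also have "\<dots> \<le> (\<Sum>i<n. part_entropy M (u i)) + part_entropy M (u n)"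
    using Suc by auto
  finally show ?case by simp
qed

end

lemma neg_mult_ln_nonneg:
  fixes p :: real assumes "0 \<le> p" "p \<le> 1" shows "0 \<le> - (p * ln p)"
  using assms by (cases "p = 0") (simp_all add: mult_nonneg_nonpos)

lemma neg_mult_ln_le_one:
  fixes p :: real assumes "0 \<le> p" shows "- (p * ln p) \<le> 1"
proof (cases "p = 0")
  case False
  then have p: "p > 0" using assms by simp
  have "ln (1/p) \<le> 1/p - 1" using p by (intro ln_le_minus_one) simp
  then have "p * ln (1/p) \<le> p * (1/p - 1)" using p by (intro mult_left_mono) auto
  also have "\<dots> \<le> 1" using p by (simp add: field_simps)
  finally show ?thesis using p by (simp add: ln_div)
qed simp

lemma neg_mult_ln_le_sqrt:
  fixes p :: real assumes "0 \<le> p" shows "- (p * ln p) \<le> 2 * sqrt p"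
proof (cases "p = 0")
  case False
  define s where "s = sqrt p"
  have s: "s > 0" "p = s * s" using False assms s_def by auto
  have "ln (1/s) \<le> 1/s" using ln_le_minus_one[of "1/s"] s by simp
  then have "2 * (s * s) * ln (1/s) \<le> 2 * (s * s) * (1/s)" using s by (intro mult_left_mono) auto
  moreover have "- (p * ln p) = 2 * (s * s) * ln (1/s)" using s by (simp add: ln_mult ln_div)
  moreover have "2 * (s * s) * (1/s) = 2 * s" using s by simp
  ultimately show ?thesis by (simp add: s_def)
qed simp

lemma (in prob_space) part_entropy_le_small_fibres:
  assumes B: "finite B" "d ` space M \<subseteq> insert a B"
    and small: "\<And>b. b \<in> B \<Longrightarrow> measure M (d -` {b} \<inter> space M) \<le> \<delta>"
  shows "part_entropy M d \<le> 1 + 2 * card B * sqrt \<delta>"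
proof -
  define g where "g b = - (measure M (d -` {b} \<inter> space M) * ln (measure M (d -` {b} \<inter> space M)))" for b
  have g_nonneg: "0 \<le> g b" for b unfolding g_def by (rule neg_mult_ln_nonneg) auto
  have "part_entropy M d = (\<Sum>b\<in>d ` space M. g b)"
    unfolding part_entropy_def g_def by (simp add: sum_negf)
  also have "\<dots> \<le> (\<Sum>b\<in>insert a B. g b)" by (rule sum_mono2) (use B g_nonneg in auto)
  also have "\<dots> \<le> g a + (\<Sum>b\<in>B. g b)" using B g_nonneg by (simp add: sum.insert_if)
  also have "\<dots> \<le> 1 + (\<Sum>b\<in>B. 2 * sqrt \<delta>)"
  proof (rule add_mono)
    show "g a \<le> 1" unfolding g_def by (rule neg_mult_ln_le_one) simp
    show "(\<Sum>b\<in>B. g b) \<le> (\<Sum>b\<in>B. 2 * sqrt \<delta>)"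
    proof (rule sum_mono)
      fix b assume "b \<in> B"
      then have "sqrt (measure M (d -` {b} \<inter> space M)) \<le> sqrt \<delta>"
        by (intro real_sqrt_le_mono small)
      moreover have "g b \<le> 2 * sqrt (measure M (d -` {b} \<inter> space M))"
        unfolding g_def by (rule neg_mult_ln_le_sqrt[OF measure_nonneg])
      ultimately show "g b \<le> 2 * sqrt \<delta>" by linarith
    qed
  qed
  finally show ?thesis by simp
qed

lemma (in prob_space) part_entropy_comp_eq:
  assumes T: "T \<in> M \<rightarrow>\<^sub>M M"
    and preserving: "\<And>A. A \<in> sets M \<Longrightarrow> measure M (T -` A \<inter> space M) = measure M A"
    and u: "simple_function M u"
  shows "part_entropy M (u \<circ> T) = part_entropy M u"
proof -
  let ?V = "u ` space M" and ?V' = "(u \<circ> T) ` space M"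
  have sub: "?V' \<subseteq> ?V" using measurable_space[OF T] by auto
  have "(u \<circ> T) -` {v} \<inter> space M = T -` (u -` {v} \<inter> space M) \<inter> space M" for v
    using measurable_space[OF T] by auto
  then have fibre: "measure M ((u \<circ> T) -` {v} \<inter> space M) = measure M (u -` {v} \<inter> space M)" for v
    using preserving[OF simple_functionD(2)[OF u]] by simp
  have "measure M (u -` {v} \<inter> space M) = 0" if "v \<in> ?V - ?V'" for v
  proof -
    have "(u \<circ> T) -` {v} \<inter> space M = {}"
    proof (rule equals0I)
      fix x assume "x \<in> (u \<circ> T) -` {v} \<inter> space M"
      then have "v \<in> ?V'" by (metis IntE image_eqI singletonD vimageE)
      with that show False by blast
    qed
    then show ?thesis using fibre[of v] by simp
  qed
  then have "(\<Sum>v\<in>?V'. measure M (u -` {v} \<inter> space M) * ln (measure M (u -` {v} \<inter> space M)))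
      = (\<Sum>v\<in>?V. measure M (u -` {v} \<inter> space M) * ln (measure M (u -` {v} \<inter> space M)))"
    by (intro sum.mono_neutral_left simple_functionD(1)[OF u] sub) auto
  then show ?thesis unfolding part_entropy_def fibre by simp
qed

section \<open>Cylinder approximation in the shift space\<close>

lemma funpow_shift: "(shift ^^ i) x = (\<lambda>j. x (i + j))"
  by (induction i arbitrary: x) (auto simp: shift_def)

lemma map_funpow_shift: "map ((shift ^^ i) x) [0..<n] = map x [i..<i + n]"
  by (induction n) (simp_all add: funpow_shift)

lemma component_measurable: "(\<lambda>x::nat \<Rightarrow> nat. x i) \<in> borel \<rightarrow>\<^sub>M count_space UNIV"
proof -
  have "(\<lambda>x::nat \<Rightarrow> nat. x i) \<in> borel \<rightarrow>\<^sub>M (borel :: nat measure)" by measurable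
  then show ?thesis by (simp add: measurable_cong_sets[OF refl sets_borel_eq_count_space])
qed

lemma map_upt_measurable: "(\<lambda>x::nat \<Rightarrow> nat. map x [0..<n]) \<in> borel \<rightarrow>\<^sub>M count_space UNIV"
proof (induction n)
  case (Suc n)
  have "(\<lambda>x::nat \<Rightarrow> nat. (\<lambda>(a, b). a @ [b]) (map x [0..<n], x n)) \<in> borel \<rightarrow>\<^sub>M count_space UNIV"
    using Suc component_measurable by measurable
  then show ?case by simp
qed simp

lemma sets_borel_eq_sigma_sets_components:
  "sets (borel :: (nat \<Rightarrow> nat) measure) =
     sigma_sets UNIV {{x. x i \<in> A} | i A. A \<in> sets (borel :: nat measure)}"
  unfolding sets_PiM_equal_borel[symmetric] sets_PiM_single by simp

lemma shift_borel_measurable: "shift \<in> borel_measurable borel"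
proof -
  have "continuous_on UNIV shift"
    unfolding shift_def
    by (intro continuous_on_coordinatewise_then_product) (auto intro: continuous_on_product_coordinates)
  then show ?thesis by (rule borel_measurable_continuous_onI)
qed

definition cylinder :: "nat \<Rightarrow> nat list set \<Rightarrow> (nat \<Rightarrow> nat) set" where
  "cylinder n S = {x. map x [0..<n] \<in> S}"

lemma cylinder_in_borel: "cylinder n S \<in> sets borel"
proof -
  have "(\<lambda>x::nat \<Rightarrow> nat. map x [0..<n]) -` S \<inter> space borel \<in> sets borel"
    using map_upt_measurable by (rule measurable_sets) simp
  then show ?thesis by (simp add: cylinder_def vimage_def)
qed

locale subspace_prob_space = prob_space m for m :: "(nat \<Rightarrow> nat) measure" +
  fixes X :: "(nat \<Rightarrow> nat) set"
  assumes sets_eq: "sets m = sets (restrict_space borel X)"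
begin

lemma space_eq: "space m = X"
  using sets_eq_imp_space_eq[OF sets_eq] by (simp add: space_restrict_space space_borel)

lemma Int_borel_in_sets: "B \<in> sets borel \<Longrightarrow> X \<inter> B \<in> sets m"
  unfolding sets_eq sets_restrict_space by auto

lemma sets_obtain_borel:
  assumes "A \<in> sets m" obtains B where "B \<in> sets borel" "A = X \<inter> B"
  using assms unfolding sets_eq sets_restrict_space by auto

lemma measurable_from_borel: "f \<in> borel \<rightarrow>\<^sub>M N \<Longrightarrow> f \<in> m \<rightarrow>\<^sub>M N"
  by (simp add: measurable_cong_sets[OF sets_eq refl] measurable_restrict_space1)

definition mismatch :: "(nat \<Rightarrow> nat) set \<Rightarrow> (nat \<Rightarrow> nat) set \<Rightarrow> (nat \<Rightarrow> nat) set" where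
  "mismatch A B = {x \<in> X. (x \<in> A) \<noteq> (x \<in> B)}"

text \<open>Requiring good approximations at all large depths, rather than at one depth, lets finitely
  many sets be approximated at a common depth.\<close>
definition cylinder_approximable :: "(nat \<Rightarrow> nat) set \<Rightarrow> bool" where
  "cylinder_approximable A \<longleftrightarrow>
     (\<forall>e>0. \<forall>\<^sub>F n in sequentially. \<exists>S. measure m (mismatch A (cylinder n S)) < e)"

lemma mismatch_in_sets: "A \<in> sets borel \<Longrightarrow> B \<in> sets borel \<Longrightarrow> mismatch A B \<in> sets m"
proof -
  assume "A \<in> sets borel" "B \<in> sets borel"
  then have "X \<inter> ((A - B) \<union> (B - A)) \<in> sets m" by (intro Int_borel_in_sets) auto
  moreover have "mismatch A B = X \<inter> ((A - B) \<union> (B - A))" unfolding mismatch_def by auto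
  ultimately show ?thesis by simp
qed

lemma measure_mismatch_triangle:
  assumes "A \<in> sets borel" "B \<in> sets borel" "C \<in> sets borel"
  shows "measure m (mismatch A C) \<le> measure m (mismatch A B) + measure m (mismatch B C)"
proof -
  have "mismatch A C \<subseteq> mismatch A B \<union> mismatch B C" by (auto simp: mismatch_def)
  then have "measure m (mismatch A C) \<le> measure m (mismatch A B \<union> mismatch B C)"
    by (rule finite_measure_mono) (intro sets.Un mismatch_in_sets assms)
  also have "\<dots> \<le> measure m (mismatch A B) + measure m (mismatch B C)"
    by (rule measure_Un_le) (auto intro: mismatch_in_sets assms)
  finally show ?thesis .
qed

lemma cylinder_approximable_UN_lessThan:
  fixes a :: "nat \<Rightarrow> (nat \<Rightarrow> nat) set"
  assumes borel: "\<And>i. i < n \<Longrightarrow> a i \<in> sets borel"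
    and approx: "\<And>i. i < n \<Longrightarrow> cylinder_approximable (a i)"
  shows "cylinder_approximable (\<Union>i<n. a i)"
  unfolding cylinder_approximable_def
proof (intro allI impI)
  fix e :: real assume "e > 0"
  then have e': "e / (n + 1) > 0" by simp
  have "\<forall>\<^sub>F N in sequentially. \<forall>i\<in>{..<n}. \<exists>S. measure m (mismatch (a i) (cylinder N S)) < e / (n + 1)"
    using approx e' by (intro eventually_ball_finite) (auto simp: cylinder_approximable_def)
  then show "\<forall>\<^sub>F N in sequentially. \<exists>S. measure m (mismatch (\<Union>i<n. a i) (cylinder N S)) < e"
  proof (rule eventually_mono)
    fix N assume "\<forall>i\<in>{..<n}. \<exists>S. measure m (mismatch (a i) (cylinder N S)) < e / (n + 1)"
    then obtain S where S: "\<And>i. i < n \<Longrightarrow> measure m (mismatch (a i) (cylinder N (S i))) < e / (n + 1)"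
      by (metis lessThan_iff)
    have "mismatch (\<Union>i<n. a i) (cylinder N (\<Union>i<n. S i)) \<subseteq> (\<Union>i<n. mismatch (a i) (cylinder N (S i)))"
      by (auto simp: mismatch_def cylinder_def)
    then have "measure m (mismatch (\<Union>i<n. a i) (cylinder N (\<Union>i<n. S i)))
        \<le> measure m (\<Union>i<n. mismatch (a i) (cylinder N (S i)))"
      by (intro finite_measure_mono) (auto intro!: mismatch_in_sets borel cylinder_in_borel)
    also have "\<dots> \<le> (\<Sum>i<n. measure m (mismatch (a i) (cylinder N (S i))))"
      by (intro finite_measure_subadditive_finite) (auto intro!: mismatch_in_sets borel cylinder_in_borel)
    also have "\<dots> \<le> (\<Sum>i<n. e / (n + 1))" by (intro sum_mono less_imp_le S) simp
    also have "\<dots> < e" using \<open>e > 0\<close> by (simp add: field_simps)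
    finally show "\<exists>S. measure m (mismatch (\<Union>i<n. a i) (cylinder N S)) < e" by blast
  qed
qed

lemma measure_mismatch_UN_lessThan_small:
  fixes a :: "nat \<Rightarrow> (nat \<Rightarrow> nat) set"
  assumes "\<And>i. a i \<in> sets borel" "e > 0"
  shows "\<exists>n. measure m (mismatch (\<Union>i. a i) (\<Union>i<n. a i)) < e"
proof -
  define U where "U n = X \<inter> (\<Union>i<n. a i)" for n
  have U: "U n \<in> sets m" for n unfolding U_def using assms by (intro Int_borel_in_sets) auto
  have "incseq U" unfolding U_def incseq_def by (auto, meson lessThan_iff order_less_le_trans)
  then have "(\<lambda>n. measure m (U n)) \<longlonglongrightarrow> measure m (\<Union>n. U n)"
    using U by (intro finite_Lim_measure_incseq) auto
  moreover have "(\<Union>n. U n) = X \<inter> (\<Union>i. a i)" unfolding U_def by auto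
  ultimately have "(\<lambda>n. measure m (U n)) \<longlonglongrightarrow> measure m (X \<inter> (\<Union>i. a i))" by simp
  then obtain n where "norm (measure m (U n) - measure m (X \<inter> (\<Union>i. a i))) < e"
    using LIMSEQ_D[OF _ \<open>e > 0\<close>] by blast
  then have n: "measure m (X \<inter> (\<Union>i. a i)) - measure m (U n) < e" by simp
  have "mismatch (\<Union>i. a i) (\<Union>i<n. a i) = X \<inter> (\<Union>i. a i) - U n"
    unfolding mismatch_def U_def by auto
  moreover have "measure m (X \<inter> (\<Union>i. a i) - U n) = measure m (X \<inter> (\<Union>i. a i)) - measure m (U n)"
    using U by (intro finite_measure_Diff) (auto simp: U_def intro!: Int_borel_in_sets assms)
  ultimately show ?thesis using n by (intro exI[of _ n]) simp
qed

lemma cylinder_approximable_UN: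
  fixes a :: "nat \<Rightarrow> (nat \<Rightarrow> nat) set"
  assumes borel: "\<And>i. a i \<in> sets borel" and approx: "\<And>i. cylinder_approximable (a i)"
  shows "cylinder_approximable (\<Union>i. a i)"
  unfolding cylinder_approximable_def
proof (intro allI impI)
  fix e :: real assume "e > 0"
  then obtain n where n: "measure m (mismatch (\<Union>i. a i) (\<Union>i<n. a i)) < e / 2"
    using measure_mismatch_UN_lessThan_small[where a = a, OF borel, of "e / 2"] by auto
  have "cylinder_approximable (\<Union>i<n. a i)" by (rule cylinder_approximable_UN_lessThan[OF borel approx])
  then have "\<forall>\<^sub>F N in sequentially. \<exists>S. measure m (mismatch (\<Union>i<n. a i) (cylinder N S)) < e / 2"
    using \<open>e > 0\<close> half_gt_zero unfolding cylinder_approximable_def by blast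
  then show "\<forall>\<^sub>F N in sequentially. \<exists>S. measure m (mismatch (\<Union>i. a i) (cylinder N S)) < e"
  proof (rule eventually_mono)
    fix N assume "\<exists>S. measure m (mismatch (\<Union>i<n. a i) (cylinder N S)) < e / 2"
    then obtain S where "measure m (mismatch (\<Union>i<n. a i) (cylinder N S)) < e / 2" by blast
    moreover have "measure m (mismatch (\<Union>i. a i) (cylinder N S))
        \<le> measure m (mismatch (\<Union>i. a i) (\<Union>i<n. a i)) + measure m (mismatch (\<Union>i<n. a i) (cylinder N S))"
      using borel by (intro measure_mismatch_triangle cylinder_in_borel) auto
    ultimately show "\<exists>S. measure m (mismatch (\<Union>i. a i) (cylinder N S)) < e"
      using n by (intro exI[of _ S]) linarith
  qed
qed

lemma cylinder_approximable_borel: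
  assumes "A \<in> sets borel" shows "cylinder_approximable A"
proof -
  have "A \<in> sigma_sets UNIV {{x. x i \<in> B} | i B. B \<in> sets (borel :: nat measure)}"
    using assms sets_borel_eq_sigma_sets_components by simp
  then show ?thesis
  proof (induction rule: sigma_sets.induct)
    case (Basic a)
    then obtain i B where a: "a = {x. x i \<in> B}" by auto
    have exact: "\<forall>\<^sub>F N in sequentially. mismatch a (cylinder N {w. w ! i \<in> B}) = {}"
      using eventually_gt_at_top[of i] by (rule eventually_mono) (auto simp: mismatch_def cylinder_def a)
    show ?case unfolding cylinder_approximable_def
    proof (intro allI impI)
      fix e :: real assume "e > 0"
      show "\<forall>\<^sub>F N in sequentially. \<exists>S. measure m (mismatch a (cylinder N S)) < e"
        using exact by (rule eventually_mono) (use \<open>e > 0\<close> in \<open>auto intro!: exI[of _ "{w. w ! i \<in> B}"]\<close>)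
    qed
  next
    case Empty
    have "mismatch {} (cylinder N {}) = {}" for N by (simp add: mismatch_def cylinder_def)
    then show ?case unfolding cylinder_approximable_def
      by (intro allI impI always_eventually exI[of _ "{}"]) simp
  next
    case (Compl a)
    have "mismatch (UNIV - a) (cylinder N (- S)) = mismatch a (cylinder N S)" for N S
      by (auto simp: mismatch_def cylinder_def)
    then have complement: "(\<exists>S. measure m (mismatch a (cylinder N S)) < e)
        \<Longrightarrow> (\<exists>S. measure m (mismatch (UNIV - a) (cylinder N S)) < e)" for N e
      by metis
    show ?case unfolding cylinder_approximable_def
    proof (intro allI impI)
      fix e :: real assume "e > 0"
      then have "\<forall>\<^sub>F N in sequentially. \<exists>S. measure m (mismatch a (cylinder N S)) < e"
        using Compl.IH unfolding cylinder_approximable_def by blast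
      then show "\<forall>\<^sub>F N in sequentially. \<exists>S. measure m (mismatch (UNIV - a) (cylinder N S)) < e"
        by (rule eventually_mono) (rule complement)
    qed
  next
    case (Union a)
    have "a i \<in> sets borel" for i using Union.hyps sets_borel_eq_sigma_sets_components by simp
    then show ?case by (rule cylinder_approximable_UN) (rule Union.IH)
  qed
qed

end

context subspace_prob_space
begin

lemma simple_function_cylinder_approx:
  assumes f: "simple_function m f" and "\<delta> > 0"
  shows "\<exists>N \<phi>. measure m {x \<in> X. f x \<noteq> \<phi> (map x [0..<N])} \<le> \<delta>"
proof -
  define V where "V = f ` X"
  have V: "finite V" "V \<noteq> {}" using simple_functionD(1)[OF f] not_empty by (auto simp: V_def space_eq)
  have "f -` {v} \<inter> X \<in> sets m" for v
    using simple_functionD(2)[OF f, of "{v}"] by (simp add: space_eq)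
  then have "\<exists>B. B \<in> sets borel \<and> f -` {v} \<inter> X = X \<inter> B" for v
    by (metis sets_obtain_borel)
  then obtain B where B: "\<And>v. B v \<in> sets borel" "\<And>v. f -` {v} \<inter> X = X \<inter> B v" by metis
  have "\<delta> / card V > 0" using V \<open>\<delta> > 0\<close> by (simp add: card_gt_0_iff)
  then have "\<forall>v\<in>V. \<forall>\<^sub>F N in sequentially. \<exists>S. measure m (mismatch (B v) (cylinder N S)) < \<delta> / card V"
    using cylinder_approximable_borel[OF B(1)] unfolding cylinder_approximable_def by blast
  then have "\<forall>\<^sub>F N in sequentially. \<forall>v\<in>V. \<exists>S. measure m (mismatch (B v) (cylinder N S)) < \<delta> / card V"
    by (rule eventually_ball_finite[OF V(1)])
  then obtain N where "\<forall>n\<ge>N. \<forall>v\<in>V. \<exists>S. measure m (mismatch (B v) (cylinder n S)) < \<delta> / card V"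
    by (auto simp: eventually_sequentially)
  then have "\<forall>v\<in>V. \<exists>S. measure m (mismatch (B v) (cylinder N S)) < \<delta> / card V" by simp
  then obtain S where S: "\<And>v. v \<in> V \<Longrightarrow> measure m (mismatch (B v) (cylinder N (S v))) < \<delta> / card V"
    by metis
  define \<phi> where "\<phi> w = (SOME v. v \<in> V \<and> w \<in> S v)" for w
  have "{x \<in> X. f x \<noteq> \<phi> (map x [0..<N])} \<subseteq> (\<Union>v\<in>V. mismatch (B v) (cylinder N (S v)))"
  proof (rule subsetI, rule ccontr)
    fix x assume x: "x \<in> {x \<in> X. f x \<noteq> \<phi> (map x [0..<N])}"
      and good: "x \<notin> (\<Union>v\<in>V. mismatch (B v) (cylinder N (S v)))"
    have in_S_iff: "map x [0..<N] \<in> S v \<longleftrightarrow> f x = v" if "v \<in> V" for v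
    proof -
      have "x \<in> B v \<longleftrightarrow> f x = v" using B(2)[of v] x by blast
      then show ?thesis using x good that by (auto simp: mismatch_def cylinder_def)
    qed
    have "f x \<in> V" using x by (simp add: V_def)
    then have "\<phi> (map x [0..<N]) = f x"
      unfolding \<phi>_def using in_S_iff by (metis (mono_tags, lifting) someI_ex)
    then show False using x by simp
  qed
  then have "measure m {x \<in> X. f x \<noteq> \<phi> (map x [0..<N])}
      \<le> measure m (\<Union>v\<in>V. mismatch (B v) (cylinder N (S v)))"
    by (intro finite_measure_mono) (auto intro!: mismatch_in_sets B cylinder_in_borel V)
  also have "\<dots> \<le> (\<Sum>v\<in>V. measure m (mismatch (B v) (cylinder N (S v))))"
    by (intro finite_measure_subadditive_finite) (auto intro!: mismatch_in_sets B cylinder_in_borel V)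
  also have "\<dots> \<le> (\<Sum>v\<in>V. \<delta> / card V)" by (intro sum_mono less_imp_le S)
  also have "\<dots> = \<delta>" using V by simp
  finally show ?thesis by blast
qed

end

section \<open>An entropy bound for shift-invariant measures\<close>

locale shift_invariant_prob_space = subspace_prob_space +
  fixes k :: nat
  assumes subset_full_shift: "X \<subseteq> full_shift k"
    and shift_closed: "\<And>x. x \<in> X \<Longrightarrow> shift x \<in> X"
    and distr_shift: "distr m (restrict_space borel X) shift = m"
begin

lemma shift_measurable: "shift \<in> m \<rightarrow>\<^sub>M m"
proof -
  have "shift \<in> restrict_space borel X \<rightarrow>\<^sub>M restrict_space borel X"
    using shift_closed
    by (intro measurable_restrict_space2 measurable_restrict_space1 shift_borel_measurable)
      (auto simp: space_restrict_space)
  then show ?thesis by (simp add: measurable_cong_sets[OF sets_eq sets_eq])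
qed

lemma funpow_shift_measurable: "shift ^^ i \<in> m \<rightarrow>\<^sub>M m"
proof (induction i)
  case (Suc i)
  show ?case using measurable_comp[OF Suc shift_measurable] by (simp add: comp_def)
qed simp

lemma measure_shift_vimage: "A \<in> sets m \<Longrightarrow> measure m (shift -` A \<inter> space m) = measure m A"
proof -
  assume A: "A \<in> sets m"
  have "shift \<in> m \<rightarrow>\<^sub>M restrict_space borel X"
    using shift_measurable by (simp add: measurable_cong_sets[OF refl sets_eq])
  then have "emeasure (distr m (restrict_space borel X) shift) A = emeasure m (shift -` A \<inter> space m)"
    using A sets_eq by (intro emeasure_distr) auto
  then show ?thesis using distr_shift by (simp add: measure_def)
qed

lemma measure_funpow_shift_vimage:
  "A \<in> sets m \<Longrightarrow> measure m ((shift ^^ i) -` A \<inter> space m) = measure m A"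
proof (induction i arbitrary: A)
  case (Suc i)
  have eq: "(shift ^^ Suc i) -` A \<inter> space m = shift -` ((shift ^^ i) -` A \<inter> space m) \<inter> space m"
    using measurable_space[OF shift_measurable] by (auto simp del: funpow.simps simp: funpow_Suc_right)
  have "(shift ^^ i) -` A \<inter> space m \<in> sets m"
    using funpow_shift_measurable Suc.prems by (rule measurable_sets)
  then show ?case unfolding eq using Suc.IH[OF Suc.prems] by (simp only: measure_shift_vimage)
qed simp

lemma simple_function_comp_funpow_shift:
  assumes u: "simple_function m u" shows "simple_function m (\<lambda>x. u ((shift ^^ i) x))"
proof -
  have "(\<lambda>x. u ((shift ^^ i) x)) ` space m \<subseteq> u ` space m"
    using measurable_space[OF funpow_shift_measurable] by auto
  then have "finite ((\<lambda>x. u ((shift ^^ i) x)) ` space m)"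
    using simple_functionD(1)[OF u] by (rule finite_subset)
  moreover have "(\<lambda>x. u ((shift ^^ i) x)) \<in> m \<rightarrow>\<^sub>M count_space UNIV"
    using u measurable_comp[OF funpow_shift_measurable, of u]
    by (simp add: simple_function_eq_measurable comp_def)
  ultimately show ?thesis by (simp add: simple_function_eq_measurable)
qed

lemma part_entropy_comp_funpow_shift:
  "simple_function m u \<Longrightarrow> part_entropy m (\<lambda>x. u ((shift ^^ i) x)) = part_entropy m u"
  using part_entropy_comp_eq[OF funpow_shift_measurable measure_funpow_shift_vimage]
  by (simp add: comp_def)

lemma alphabet_nonempty: "k \<ge> 1"
proof -
  obtain x where "x \<in> X" using not_empty by (auto simp: space_eq)
  then have "x 0 \<in> {1..k}" using subset_full_shift by (auto simp: full_shift_def)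
  then show ?thesis by simp
qed

lemma initial_words_subset: "(\<lambda>x. map x [0..<n]) ` X \<subseteq> {w. set w \<subseteq> {1..k} \<and> length w = n}"
  using subset_full_shift by (auto simp: full_shift_def subset_iff)

lemma simple_function_initial_word: "simple_function m (\<lambda>x. map x [0..<n])"
proof -
  have "finite ((\<lambda>x. map x [0..<n]) ` space m)"
    unfolding space_eq by (rule finite_subset[OF initial_words_subset]) (simp add: finite_lists_length_eq)
  then show ?thesis
    by (simp add: simple_function_eq_measurable measurable_from_borel map_upt_measurable)
qed

lemma part_entropy_initial_word_le: "part_entropy m (\<lambda>x. map x [0..<n]) \<le> n * ln k"
proof -
  have "card ((\<lambda>x. map x [0..<n]) ` space m) \<le> card {w. set w \<subseteq> {1..k} \<and> length w = n}"
    using initial_words_subset by (intro card_mono) (simp_all add: finite_lists_length_eq space_eq)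
  then have card_le: "card ((\<lambda>x. map x [0..<n]) ` space m) \<le> k ^ n"
    by (simp add: card_lists_length_eq)
  have "card ((\<lambda>x. map x [0..<n]) ` space m) > 0"
    using simple_functionD(1)[OF simple_function_initial_word] not_empty by (simp add: card_gt_0_iff)
  then have "ln (card ((\<lambda>x. map x [0..<n]) ` space m)) \<le> ln (k ^ n)"
    using card_le by (intro ln_mono) (simp_all only: of_nat_le_iff of_nat_0_less_iff)
  also have "ln (k ^ n) = n * ln k" using alphabet_nonempty by (simp add: ln_realpow)
  finally show ?thesis
    by (rule order_trans[OF part_entropy_le_ln_card[OF simple_function_initial_word]])
qed

lemma part_entropy_itinerary_le:
  assumes d: "simple_function m d"
    and f: "\<And>x. x \<in> X \<Longrightarrow> f x = (case d x of None \<Rightarrow> \<phi> (map x [0..<N]) | Some v \<Rightarrow> v)"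
  shows "part_entropy m (itinerary shift f n) \<le> (n + N) * ln k + n * part_entropy m d"
proof -
  define G where "G x = map x [0..<n + N]" for x :: "nat \<Rightarrow> nat"
  define D where "D x = map (\<lambda>i. d ((shift ^^ i) x)) [0..<n]" for x
  have G: "simple_function m G" unfolding G_def by (rule simple_function_initial_word)
  have D: "simple_function m D"
    unfolding D_def by (intro simple_function_map_upt simple_function_comp_funpow_shift d)
  have "itinerary shift f n x =
      map (\<lambda>i. case D x ! i of None \<Rightarrow> \<phi> (take N (drop i (G x))) | Some v \<Rightarrow> v) [0..<n]"
    if "x \<in> space m" for x
  proof -
    have "f ((shift ^^ i) x) = (case D x ! i of None \<Rightarrow> \<phi> (take N (drop i (G x))) | Some v \<Rightarrow> v)"
      if "i < n" for i
    proof -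
      have "take N (drop i (G x)) = map ((shift ^^ i) x) [0..<N]"
        using that by (simp add: G_def map_funpow_shift drop_map take_map)
      moreover have "D x ! i = d ((shift ^^ i) x)" using that by (simp add: D_def)
      moreover have "(shift ^^ i) x \<in> X"
        using measurable_space[OF funpow_shift_measurable \<open>x \<in> space m\<close>] by (simp add: space_eq)
      ultimately show ?thesis using f by (simp split: option.split)
    qed
    then show ?thesis by (simp add: itinerary_def)
  qed
  then have "part_entropy m (itinerary shift f n) \<le> part_entropy m (\<lambda>x. (G x, D x))"
    by (intro part_entropy_comp_le[where \<psi> = "\<lambda>(g, ds). map (\<lambda>i. case ds ! i of
        None \<Rightarrow> \<phi> (take N (drop i g)) | Some v \<Rightarrow> v) [0..<n]"]) (use G D in auto)
  also have "\<dots> \<le> part_entropy m G + part_entropy m D" by (rule part_entropy_pair_le[OF G D])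
  also have "part_entropy m G \<le> (n + N) * ln k"
    unfolding G_def using part_entropy_initial_word_le[of "n + N"] by simp
  also have "part_entropy m D \<le> (\<Sum>i<n. part_entropy m (\<lambda>x. d ((shift ^^ i) x)))"
    unfolding D_def by (intro part_entropy_map_upt_le simple_function_comp_funpow_shift d)
  also have "\<dots> = n * part_entropy m d" by (simp add: part_entropy_comp_funpow_shift[OF d])
  finally show ?thesis by simp
qed

lemma exists_low_entropy_correction:
  assumes f: "simple_function m f"
  shows "\<exists>N \<phi> d. simple_function m d \<and> part_entropy m d \<le> 2 \<and>
    (\<forall>x\<in>X. f x = (case d x of None \<Rightarrow> \<phi> (map x [0..<N]) | Some v \<Rightarrow> v))"
proof -
  define V where "V = f ` space m"
  have V: "finite V" "V \<noteq> {}" using simple_functionD(1)[OF f] not_empty by (auto simp: V_def)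
  then have "card V > 0" by (simp add: card_gt_0_iff)
  \<comment> \<open>chosen so that the \<open>card V\<close> exceptional classes contribute entropy at most 1\<close>
  define \<delta> where "\<delta> = (1 / (2 * real (card V)))\<^sup>2"
  have "\<delta> > 0" using \<open>card V > 0\<close> unfolding \<delta>_def by (intro zero_less_power divide_pos_pos) auto
  from simple_function_cylinder_approx[OF f this] obtain N \<phi>
    where bad: "measure m {x \<in> X. f x \<noteq> \<phi> (map x [0..<N])} \<le> \<delta>"
    by blast
  define d where "d x = (if f x = \<phi> (map x [0..<N]) then None else Some (f x))" for x
  have r: "simple_function m (\<lambda>x. \<phi> (map x [0..<N]))"
    by (rule simple_function_compose1[OF simple_function_initial_word])
  have "simple_function m d"
    unfolding d_def
    by (rule simple_function_compose2[OF f r, where h = "\<lambda>a b. if a = b then None else Some a"])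
  moreover have "part_entropy m d \<le> 1 + 2 * card (Some ` V) * sqrt \<delta>"
  proof (rule part_entropy_le_small_fibres[where a = None and B = "Some ` V"])
    show "d ` space m \<subseteq> insert None (Some ` V)" by (auto simp: d_def V_def)
    fix b assume "b \<in> Some ` V"
    then have "d -` {b} \<inter> space m \<subseteq> {x \<in> X. f x \<noteq> \<phi> (map x [0..<N])}"
      by (auto simp: d_def space_eq split: if_splits)
    moreover have "{x \<in> X. f x \<noteq> \<phi> (map x [0..<N])} \<in> sets m"
    proof -
      have "simple_function m (\<lambda>x. (f x, \<phi> (map x [0..<N])))"
        by (rule simple_function_Pair[OF f r])
      from simple_functionD(2)[OF this, of "{p. fst p \<noteq> snd p}"]
      show ?thesis by (simp add: space_eq vimage_def Int_def conj_commute)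
    qed
    ultimately show "measure m (d -` {b} \<inter> space m) \<le> \<delta>"
      using bad by (meson finite_measure_mono order_trans)
  qed (use V in auto)
  moreover have "1 + 2 * card (Some ` V) * sqrt \<delta> = (2::real)"
    using \<open>card V > 0\<close> by (simp add: \<delta>_def card_image)
  moreover have "f x = (case d x of None \<Rightarrow> \<phi> (map x [0..<N]) | Some v \<Rightarrow> v)" for x
    by (simp add: d_def)
  ultimately show ?thesis by (intro exI[of _ N] exI[of _ \<phi>] exI[of _ d]) auto
qed

end

text \<open>If \<open>a\<close> diverges, \<open>lim a\<close> is the unspecified value \<open>THE L. False\<close>; this junk value
  therefore enters every bound on \<open>ks_entropy\<close>.\<close>
lemma lim_le_max_THE_False:
  fixes a b :: "nat \<Rightarrow> real"
  assumes le: "\<And>n. n \<ge> 1 \<Longrightarrow> a n \<le> b n" and b: "b \<longlonglongrightarrow> B"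
  shows "lim a \<le> max (THE L::real. False) B"
proof (cases "convergent a")
  case True
  then have "a \<longlonglongrightarrow> lim a" by (simp add: convergent_LIMSEQ_iff)
  then have "lim a \<le> B" using b le by (intro LIMSEQ_le[of a _ b]) auto
  then show ?thesis by simp
next
  case False
  then have "(\<lambda>L. a \<longlonglongrightarrow> L) = (\<lambda>L. False)" by (auto simp: convergent_def)
  then show ?thesis by (simp add: lim_def)
qed

context shift_invariant_prob_space
begin

lemma ks_entropy_le: "ks_entropy m shift \<le> max (THE L::real. False) (ln k + 2)"
proof -
  let ?F = "{f :: (nat \<Rightarrow> nat) \<Rightarrow> nat. f \<in> m \<rightarrow>\<^sub>M count_space UNIV \<and> finite (f ` space m)}"
  have "(\<lambda>_. 0) \<in> ?F" by (auto intro: finite_subset[of _ "{0}"])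
  then have "?F \<noteq> {}" by (metis equals0D)
  then show ?thesis
    unfolding ks_entropy_eq_SUP_itinerary
  proof (rule cSUP_least)
    fix f assume "f \<in> ?F"
    then have f: "simple_function m f" by (simp add: simple_function_eq_measurable)
    obtain N \<phi> d where d: "simple_function m d" "part_entropy m d \<le> 2"
      "\<And>x. x \<in> X \<Longrightarrow> f x = (case d x of None \<Rightarrow> \<phi> (map x [0..<N]) | Some v \<Rightarrow> v)"
      using exists_low_entropy_correction[OF f] by blast
    have "part_entropy m (itinerary shift f n) / n \<le> (ln k + 2) + N * ln k / n" if "n \<ge> 1" for n
    proof -
      have "part_entropy m (itinerary shift f n) \<le> (n + N) * ln k + n * 2"
        using part_entropy_itinerary_le[OF d(1,3), of n] mult_left_mono[OF d(2), of "real n"] by simp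
      then show ?thesis using that by (simp add: field_simps)
    qed
    moreover have "(\<lambda>n. (ln k + 2) + N * ln k / n) \<longlonglongrightarrow> (ln k + 2) + 0"
      by (intro tendsto_add tendsto_const lim_const_over_n)
    ultimately show "lim (\<lambda>n. part_entropy m (itinerary shift f n) / n) \<le> max (THE L::real. False) (ln k + 2)"
      by (intro lim_le_max_THE_False) auto
  qed
qed

end

lemma bdd_above_ks_entropy_inv_measures:
  assumes "X \<subseteq> full_shift k" and "\<And>x. x \<in> X \<Longrightarrow> shift x \<in> X"
  shows "bdd_above ((\<lambda>m. ks_entropy m shift) ` inv_measures X)"
proof (rule bdd_aboveI2)
  fix m assume "m \<in> inv_measures X"
  then have m: "sets m = sets (restrict_space borel X)" "prob_space m"
    "distr m (restrict_space borel X) shift = m"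
    by (simp_all add: inv_measures_def)
  interpret shift_invariant_prob_space m X k
    by (intro shift_invariant_prob_space.intro subspace_prob_space.intro
        shift_invariant_prob_space_axioms.intro subspace_prob_space_axioms.intro m assms)
  show "ks_entropy m shift \<le> max (THE L::real. False) (ln k + 2)" by (rule ks_entropy_le)
qed

lemma unique_maximizer_on_subset:
  fixes h :: "'a \<Rightarrow> real"
  assumes bdd: "bdd_above (h ` A)" and "F \<subseteq> A" "\<mu> \<in> F"
    and max: "h \<mu> = (SUP a\<in>A. h a)"
    and unique: "\<And>a. a \<in> A \<Longrightarrow> h a = (SUP a\<in>A. h a) \<Longrightarrow> a = \<mu>"
  shows "{a \<in> F. h a = (SUP a\<in>F. h a)} = {\<mu>}"
proof -
  have "(SUP a\<in>F. h a) \<le> (SUP a\<in>A. h a)"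
    using \<open>F \<subseteq> A\<close> \<open>\<mu> \<in> F\<close> bdd by (intro cSUP_subset_mono) auto
  moreover have "h \<mu> \<le> (SUP a\<in>F. h a)"
    using \<open>F \<subseteq> A\<close> \<open>\<mu> \<in> F\<close> bdd by (intro cSUP_upper bdd_above_mono[OF bdd]) auto
  ultimately have "(SUP a\<in>F. h a) = h \<mu>" using max by simp
  then show ?thesis using \<open>F \<subseteq> A\<close> \<open>\<mu> \<in> F\<close> max unique by auto
qed

theorem corollary4p7:
  fixes k l :: nat and X Y :: "(nat \<Rightarrow> nat) set"
    and \<pi> :: "(nat \<Rightarrow> nat) \<Rightarrow> (nat \<Rightarrow> nat)" and \<mu> :: "(nat \<Rightarrow> nat) measure"
  assumes "sofic k X" and "irreducible X"
    and "sofic l Y" and "irreducible Y"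
    and "factor_map X Y \<pi>" and "one_block X \<pi>"
    and "has_specification X"
    and "\<mu> \<in> inv_measures X"
    and "ks_entropy \<mu> shift = (SUP m \<in> inv_measures X. ks_entropy m shift)"
    and "\<forall>m \<in> inv_measures X. ks_entropy m shift = (SUP m' \<in> inv_measures X. ks_entropy m' shift) \<longrightarrow> m = \<mu>"
  shows "{m \<in> inv_measures X. pushfwd Y \<pi> m = pushfwd Y \<pi> \<mu> \<and>
            ks_entropy m shift = (SUP m' \<in> {m' \<in> inv_measures X. pushfwd Y \<pi> m' = pushfwd Y \<pi> \<mu>}. ks_entropy m' shift)}
         = {\<mu>}"
proof -
  define fibre where "fibre = {m' \<in> inv_measures X. pushfwd Y \<pi> m' = pushfwd Y \<pi> \<mu>}"
  have "X \<subseteq> full_shift k" "\<And>x. x \<in> X \<Longrightarrow> shift x \<in> X"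
    using \<open>sofic k X\<close> by (auto simp: sofic_def subshift_def)
  then have "bdd_above ((\<lambda>m. ks_entropy m shift) ` inv_measures X)"
    by (rule bdd_above_ks_entropy_inv_measures)
  moreover have "fibre \<subseteq> inv_measures X" "\<mu> \<in> fibre" using assms(8) by (auto simp: fibre_def)
  ultimately have "{m \<in> fibre. ks_entropy m shift = (SUP m' \<in> fibre. ks_entropy m' shift)} = {\<mu>}"
    using assms(9,10) by (intro unique_maximizer_on_subset) auto
  then show ?thesis by (simp add: fibre_def)
qed

end
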